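(* Let $V_0\in\mathcal{X}^1$ and $w\in H^1(\mathbb{R};\mathbb{C})$. Then $V_0+w\in\mathcal{X}^1$ and $$[p](V_0+w)=[p](V_0)+\frac12\int_\mathbb{R}\langle iw,w'\rangle+\int_\mathbb{R}\langle iw,V_0'\rangle\bmod\pi.$$
   Context: $\mathcal{X}^1=\{w\in L^\infty(\mathbb{R};\mathbb{C}):\ w'\in L^2,\ 1-|w|^2\in L^2\}$. $\langle a,b\rangle=\mathrm{Re}(a\bar b)$. For $v\in\mathcal{X}^1$, $|v(x)|\to1$ at infinity and the untwisted momentum is $[p](v)=\lim_{R\to\infty}\big(\frac12\int_{-R}^R\langle iv,v'\rangle-\frac12(\arg v(R)-\arg v(-R))\big)\in\mathbb{R}/\pi\mathbb{Z}$ (the limit exists). *)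

theory Defs
  imports "HOL-Analysis.Analysis"
begin

definition cinner :: "complex \<Rightarrow> complex \<Rightarrow> real" where
  "cinner a b = Re (a * cnj b)"

definition L2 :: "(real \<Rightarrow> 'a::{banach,second_countable_topology}) \<Rightarrow> bool" where
  "L2 f \<longleftrightarrow> f \<in> borel_measurable lborel \<and> integrable lborel (\<lambda>x. (norm (f x))\<^sup>2)"

text \<open>Weak derivative of a (continuous representative) function on R: g is locally
  integrable and v is its indefinite integral (absolutely continuous representative).\<close>
definition weak_deriv :: "(real \<Rightarrow> complex) \<Rightarrow> (real \<Rightarrow> complex) \<Rightarrow> bool" where
  "weak_deriv v g \<longleftrightarrow> g \<in> borel_measurable lborel \<and>
     (\<forall>a b. a \<le> b \<longrightarrow> set_integrable lborel {a..b} g \<and>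
         v b - v a = (LINT t:{a..b}|lborel. g t))"

definition X1 :: "(real \<Rightarrow> complex) \<Rightarrow> bool" where
  "X1 v \<longleftrightarrow> bounded (range v) \<and> (\<exists>g. weak_deriv v g \<and> L2 g) \<and>
     L2 (\<lambda>x. 1 - (norm (v x))\<^sup>2)"

definition H1 :: "(real \<Rightarrow> complex) \<Rightarrow> bool" where
  "H1 w \<longleftrightarrow> L2 w \<and> (\<exists>g. weak_deriv w g \<and> L2 g)"

definition pR :: "(real \<Rightarrow> complex) \<Rightarrow> (real \<Rightarrow> complex) \<Rightarrow> real \<Rightarrow> real" where
  "pR v g R = (1/2) * (LINT x:{-R..R}|lborel. cinner (\<i> * v x) (g x))
               - (1/2) * (Arg (v R) - Arg (v (-R)))"

text \<open>Convergence in R/(pi Z) as R \<rightarrow> \<infinity>, via the homeomorphism R/(pi Z) \<cong> S^1, x \<mapsto> exp(2ix).\<close>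
definition momentum_is :: "(real \<Rightarrow> complex) \<Rightarrow> (real \<Rightarrow> complex) \<Rightarrow> real \<Rightarrow> bool" where
  "momentum_is v g p \<longleftrightarrow> ((\<lambda>R. cis (2 * pR v g R)) \<longlongrightarrow> cis (2 * p)) at_top"

end

(*
  Write V = V0 + w.  Since w and its derivative are square integrable, |w|^2 has an
  integrable derivative, so w is continuous, bounded and tends to 0 at both ends; then
  1 - |V|^2 = (1 - |V0|^2) - 2 Re (V0 conj w) - |w|^2 is square integrable and V lies in X^1.

  For the momentum, expand the truncated integral of <iV, V'> bilinearly.  The product rule
  for absolutely continuous functions (proved with Fubini on a triangle) turns the cross term
  \<integral><iV0, w'> into \<integral><iw, V0'> plus the boundary term Re (i V0 conj w) between -R and R,
  which vanishes as R \<rightarrow> \<infinity>.  The phase corrections change by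
  Arg V0(\<plusminus>R) - Arg V(\<plusminus>R), which tends to 0 modulo 2\<pi> because |V0| \<rightarrow> 1 while w \<rightarrow> 0.
*)

theory Submission
  imports Defs
begin

section \<open>Weak derivatives\<close>

lemma weak_derivD:
  assumes "weak_deriv v g" "a \<le> b"
  shows "integrable lborel (\<lambda>t. indicator {a..b} t *\<^sub>R g t)"
    and "v b - v a = (\<integral>t. indicator {a..b} t *\<^sub>R g t \<partial>lborel)"
  using assms unfolding weak_deriv_def set_integrable_def set_lebesgue_integral_def by auto

lemma weak_derivI:
  assumes "g \<in> borel_measurable lborel"
    and "\<And>a b. a \<le> b \<Longrightarrow> integrable lborel (\<lambda>t. indicator {a..b} t *\<^sub>R g t)"
    and "\<And>a b. a \<le> b \<Longrightarrow> v b - v a = (\<integral>t. indicator {a..b} t *\<^sub>R g t \<partial>lborel)"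
  shows "weak_deriv v g"
  using assms unfolding weak_deriv_def set_integrable_def set_lebesgue_integral_def by auto

lemma weak_deriv_measurable:
  "weak_deriv v g \<Longrightarrow> g \<in> borel_measurable lborel"
  unfolding weak_deriv_def by auto

lemma weak_deriv_continuous:
  assumes "weak_deriv v g"
  shows "continuous_on UNIV v"
proof (rule continuous_at_imp_continuous_on, intro ballI)
  fix x :: real
  have int: "set_integrable lborel {x - 1..y} g" and eq: "v y = v (x - 1) + integral {x - 1..y} g"
    if "x - 1 \<le> y" for y
  proof -
    show si: "set_integrable lborel {x - 1..y} g"
      using assms that unfolding weak_deriv_def by auto
    have "v y - v (x - 1) = (LINT t:{x - 1..y}|lborel. g t)"
      using assms that unfolding weak_deriv_def by auto
    then show "v y = v (x - 1) + integral {x - 1..y} g"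
      by (simp add: set_borel_integral_eq_integral(2)[OF si] algebra_simps)
  qed
  have "continuous_on {x - 1..x + 1} (\<lambda>y. v (x - 1) + integral {x - 1..y} g)"
    by (intro continuous_intros indefinite_integral_continuous_1
        set_borel_integral_eq_integral(1) int) simp
  then have "continuous_on {x - 1..x + 1} v"
    by (rule continuous_on_eq) (metis atLeastAtMost_iff eq)
  then show "isCont v x"
    by (rule continuous_on_interior) (auto simp: interior_atLeastAtMost_real)
qed

lemma weak_deriv_borel_measurable:
  "weak_deriv v g \<Longrightarrow> v \<in> borel_measurable borel"
  using weak_deriv_continuous borel_measurable_continuous_onI by blast

lemma borel_measurable_cnj [measurable (raw)]:
  "f \<in> borel_measurable M \<Longrightarrow> (\<lambda>x. cnj (f x)) \<in> borel_measurable M"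
  by (rule borel_measurable_continuous_on[OF continuous_on_cnj[OF continuous_on_id]])

lemma weak_deriv_bounded_linear:
  assumes L: "bounded_linear L" and v: "weak_deriv v g"
  shows "weak_deriv (\<lambda>x. L (v x)) (\<lambda>x. L (g x))"
proof (rule weak_derivI)
  interpret L: bounded_linear L by (fact L)
  have ind: "(\<lambda>t. indicator {a..b} t *\<^sub>R L (g t)) = (\<lambda>t. L (indicator {a..b} t *\<^sub>R g t))" for a b
    by (simp add: L.scaleR)
  show "(\<lambda>x. L (g x)) \<in> borel_measurable lborel"
    using L.continuous_on[OF continuous_on_id] weak_deriv_measurable[OF v]
    by (rule borel_measurable_continuous_on)
  fix a b :: real
  assume ab: "a \<le> b"
  show "integrable lborel (\<lambda>t. indicator {a..b} t *\<^sub>R L (g t))"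
    unfolding ind by (rule integrable_bounded_linear[OF L weak_derivD(1)[OF v ab]])
  show "L (v b) - L (v a) = (\<integral>t. indicator {a..b} t *\<^sub>R L (g t) \<partial>lborel)"
    unfolding ind integral_bounded_linear[OF L weak_derivD(1)[OF v ab]] weak_derivD(2)[OF v ab, symmetric]
    by (rule L.diff[symmetric])
qed

lemma weak_deriv_add:
  assumes u: "weak_deriv u f" and v: "weak_deriv v h"
  shows "weak_deriv (\<lambda>x. u x + v x) (\<lambda>x. f x + h x)"
proof (rule weak_derivI)
  show "(\<lambda>x. f x + h x) \<in> borel_measurable lborel"
    using weak_deriv_measurable[OF u] weak_deriv_measurable[OF v] by measurable
  fix a b :: real
  assume ab: "a \<le> b"
  note f = weak_derivD[OF u ab] and h = weak_derivD[OF v ab]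
  show "integrable lborel (\<lambda>t. indicator {a..b} t *\<^sub>R (f t + h t))"
    using f h by (simp add: scaleR_add_right)
  show "u b + v b - (u a + v a) = (\<integral>t. indicator {a..b} t *\<^sub>R (f t + h t) \<partial>lborel)"
    using f h by (simp add: scaleR_add_right Bochner_Integration.integral_add f(2)[symmetric] h(2)[symmetric])
qed

lemma weak_deriv_diff:
  assumes "weak_deriv u f" "weak_deriv v h"
  shows "weak_deriv (\<lambda>x. u x - v x) (\<lambda>x. f x - h x)"
  using weak_deriv_add[OF assms(1) weak_deriv_bounded_linear[OF bounded_linear_minus[OF bounded_linear_ident] assms(2)]]
  by simp

lemma weak_deriv_const: "weak_deriv (\<lambda>x. c) (\<lambda>x. 0)"
  by (rule weak_derivI) auto

lemma weak_deriv_cnj: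
  "weak_deriv v g \<Longrightarrow> weak_deriv (\<lambda>x. cnj (v x)) (\<lambda>x. cnj (g x))"
  by (rule weak_deriv_bounded_linear[OF bounded_linear_cnj])

lemma integrable_interval_mult_continuous:
  fixes f c :: "real \<Rightarrow> 'a::{real_normed_field, banach, second_countable_topology}"
  assumes f: "integrable lborel (\<lambda>t. indicator {a..b} t *\<^sub>R f t)"
    and c: "continuous_on UNIV c" and [measurable]: "f \<in> borel_measurable borel"
  shows "integrable lborel (\<lambda>t. indicator {a..b} t *\<^sub>R (f t * c t))"
proof -
  have "compact (c ` {a..b})"
    by (rule compact_continuous_image) (auto intro: continuous_on_subset[OF c])
  then obtain B where B: "\<And>x. x \<in> {a..b} \<Longrightarrow> norm (c x) \<le> B"
    by (meson compact_imp_bounded bounded_iff imageI)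
  have [measurable]: "c \<in> borel_measurable borel"
    using c by (rule borel_measurable_continuous_onI)
  show ?thesis
  proof (rule Bochner_Integration.integrable_bound[OF integrable_scaleR_right[OF f, of B]])
    show "AE x in lborel. norm (indicator {a..b} x *\<^sub>R (f x * c x)) \<le> norm (B *\<^sub>R (indicator {a..b} x *\<^sub>R f x))"
    proof (rule AE_I2)
      fix x
      show "norm (indicator {a..b} x *\<^sub>R (f x * c x)) \<le> norm (B *\<^sub>R (indicator {a..b} x *\<^sub>R f x))"
      proof (cases "x \<in> {a..b}")
        case True
        then have "0 \<le> B"
          using B norm_ge_zero order_trans by blast
        with True show ?thesis
          using mult_right_mono[OF B[OF True] norm_ge_zero[of "f x"]] by (simp add: norm_mult mult.commute)
      qed simp
    qed
  qed measurable
qed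

lemma integrable_pair_lborel_mult:
  fixes F G :: "real \<Rightarrow> 'a::{real_normed_field, banach, second_countable_topology}"
  assumes F: "integrable lborel F" and G: "integrable lborel G"
  shows "integrable (lborel \<Otimes>\<^sub>M lborel) (\<lambda>(s, t). F s * G t)"
proof (rule lborel_pair.Fubini_integrable)
  have [measurable]: "F \<in> borel_measurable borel" "G \<in> borel_measurable borel"
    using F G by auto
  show "(\<lambda>(s, t). F s * G t) \<in> borel_measurable (lborel \<Otimes>\<^sub>M lborel)"
    by measurable
  have "(\<lambda>s. \<integral>t. norm (F s * G t) \<partial>lborel) = (\<lambda>s. norm (F s) * (\<integral>t. norm (G t) \<partial>lborel))"
    by (simp add: norm_mult)
  then show "integrable lborel (\<lambda>s. \<integral>t. norm (case (s, t) of (s, t) \<Rightarrow> F s * G t) \<partial>lborel)"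
    using F by simp
  show "AE s in lborel. integrable lborel (\<lambda>t. case (s, t) of (s, t) \<Rightarrow> F s * G t)"
    using G by simp
qed

text \<open>Both sides are the integral of \<open>h s * f t\<close> over the triangle \<open>a \<le> s \<le> t \<le> b\<close>.\<close>

lemma weak_deriv_integral_triangle_swap:
  assumes u: "weak_deriv u f" and v: "weak_deriv v h" and ab: "a \<le> b"
  shows "(\<integral>t. indicator {a..b} t *\<^sub>R (f t * (v t - v a)) \<partial>lborel)
    = (\<integral>s. indicator {a..b} s *\<^sub>R (h s * (u b - u s)) \<partial>lborel)"
proof -
  define K where "K s t = indicator {p. fst p \<le> snd p} (s, t) *\<^sub>R
      ((indicator {a..b} s *\<^sub>R h s) * (indicator {a..b} t *\<^sub>R f t))" for s t
  have [measurable]: "f \<in> borel_measurable borel" "h \<in> borel_measurable borel"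
    using weak_deriv_measurable[OF u] weak_deriv_measurable[OF v] by auto
  have "{p. fst p \<le> snd p} \<in> sets (borel \<Otimes>\<^sub>M borel :: (real \<times> real) measure)"
    unfolding borel_prod by (intro borel_closed closed_Collect_le continuous_intros)
  then have "integrable (lborel \<Otimes>\<^sub>M lborel) (\<lambda>p. indicator {p. fst p \<le> snd p} p *\<^sub>R
      (case p of (s, t) \<Rightarrow> (indicator {a..b} s *\<^sub>R h s) * (indicator {a..b} t *\<^sub>R f t)))"
    using integrable_pair_lborel_mult[OF weak_derivD(1)[OF v ab] weak_derivD(1)[OF u ab]]
    by (intro integrable_mult_indicator) simp_all
  then have "integrable (lborel \<Otimes>\<^sub>M lborel) (\<lambda>(s, t). K s t)"
    by (simp add: K_def case_prod_beta')
  then have "(\<integral>t. (\<integral>s. K s t \<partial>lborel) \<partial>lborel) = (\<integral>s. (\<integral>t. K s t \<partial>lborel) \<partial>lborel)"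
    by (rule lborel_pair.Fubini_integral)
  moreover have "(\<integral>s. K s t \<partial>lborel) = indicator {a..b} t *\<^sub>R (f t * (v t - v a))" for t
  proof (cases "t \<in> {a..b}")
    case True
    then have K_t: "(\<lambda>s. K s t) = (\<lambda>s. f t * (indicator {a..t} s *\<^sub>R h s))"
      by (auto simp: K_def indicator_def fun_eq_iff)
    show ?thesis
      using True weak_derivD(2)[OF v, of a t] unfolding K_t integral_mult_right_zero by simp
  qed (simp add: K_def)
  moreover have "(\<integral>t. K s t \<partial>lborel) = indicator {a..b} s *\<^sub>R (h s * (u b - u s))" for s
  proof (cases "s \<in> {a..b}")
    case True
    then have K_s: "(\<lambda>t. K s t) = (\<lambda>t. h s * (indicator {s..b} t *\<^sub>R f t))"
      by (auto simp: K_def indicator_def fun_eq_iff)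
    show ?thesis
      using True weak_derivD(2)[OF u, of s b] unfolding K_s integral_mult_right_zero by simp
  qed (simp add: K_def)
  ultimately show ?thesis
    by simp
qed

lemma weak_deriv_integral_mult_diff_const:
  assumes u: "weak_deriv u f" and ab: "a \<le> b"
    and fv: "integrable lborel (\<lambda>t. indicator {a..b} t *\<^sub>R (f t * v t))"
  shows "(\<integral>t. indicator {a..b} t *\<^sub>R (f t * (v t - c)) \<partial>lborel)
    = (\<integral>t. indicator {a..b} t *\<^sub>R (f t * v t) \<partial>lborel) - c * (u b - u a)"
proof -
  have "(\<integral>t. indicator {a..b} t *\<^sub>R (f t * (v t - c)) \<partial>lborel)
      = (\<integral>t. indicator {a..b} t *\<^sub>R (f t * v t) - c * (indicator {a..b} t *\<^sub>R f t) \<partial>lborel)"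
    by (rule Bochner_Integration.integral_cong) (auto simp: algebra_simps)
  also have "\<dots> = (\<integral>t. indicator {a..b} t *\<^sub>R (f t * v t) \<partial>lborel)
      - (\<integral>t. c * (indicator {a..b} t *\<^sub>R f t) \<partial>lborel)"
    by (rule Bochner_Integration.integral_diff[OF fv integrable_mult_right[OF weak_derivD(1)[OF u ab]]])
  also have "\<dots> = (\<integral>t. indicator {a..b} t *\<^sub>R (f t * v t) \<partial>lborel) - c * (u b - u a)"
    by (simp only: integral_mult_right_zero weak_derivD(2)[OF u ab])
  finally show ?thesis .
qed

lemma weak_deriv_mult:
  assumes u: "weak_deriv u f" and v: "weak_deriv v h"
  shows "weak_deriv (\<lambda>x. u x * v x) (\<lambda>x. f x * v x + u x * h x)"
proof (rule weak_derivI)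
  have [measurable]: "f \<in> borel_measurable borel" "h \<in> borel_measurable borel"
    "u \<in> borel_measurable borel" "v \<in> borel_measurable borel"
    using u v by (auto dest: weak_deriv_measurable weak_deriv_borel_measurable)
  show "(\<lambda>x. f x * v x + u x * h x) \<in> borel_measurable lborel"
    by measurable
  fix a b :: real
  assume ab: "a \<le> b"
  have fv: "integrable lborel (\<lambda>t. indicator {a..b} t *\<^sub>R (f t * v t))"
    by (rule integrable_interval_mult_continuous[OF weak_derivD(1)[OF u ab] weak_deriv_continuous[OF v]]) simp
  have hu: "integrable lborel (\<lambda>t. indicator {a..b} t *\<^sub>R (h t * u t))"
    by (rule integrable_interval_mult_continuous[OF weak_derivD(1)[OF v ab] weak_deriv_continuous[OF u]]) simp
  then show "integrable lborel (\<lambda>t. indicator {a..b} t *\<^sub>R (f t * v t + u t * h t))"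
    using fv by (simp add: scaleR_add_right mult.commute)
  define I1 where "I1 = (\<integral>t. indicator {a..b} t *\<^sub>R (f t * v t) \<partial>lborel)"
  define I2 where "I2 = (\<integral>t. indicator {a..b} t *\<^sub>R (h t * u t) \<partial>lborel)"
  have "(\<integral>s. indicator {a..b} s *\<^sub>R (h s * (u b - u s)) \<partial>lborel)
      = - (\<integral>s. indicator {a..b} s *\<^sub>R (h s * (u s - u b)) \<partial>lborel)"
    by (subst integral_minus[symmetric], rule Bochner_Integration.integral_cong) (auto simp: algebra_simps)
  also have "\<dots> = u b * (v b - v a) - I2"
    unfolding I2_def weak_deriv_integral_mult_diff_const[OF v ab hu] by simp
  finally have "I1 - v a * (u b - u a) = u b * (v b - v a) - I2"
    using weak_deriv_integral_triangle_swap[OF u v ab]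
    unfolding I1_def weak_deriv_integral_mult_diff_const[OF u ab fv] by simp
  then have "u b * v b - u a * v a = I1 + I2"
    by (simp add: algebra_simps)
  then show "u b * v b - u a * v a = (\<integral>t. indicator {a..b} t *\<^sub>R (f t * v t + u t * h t) \<partial>lborel)"
    unfolding I1_def I2_def using fv hu by (simp add: scaleR_add_right mult.commute)
qed

section \<open>Uniqueness of weak derivatives\<close>

text \<open>The positive and negative parts of \<open>H\<close> are densities of finite measures that agree
  on every half-line, hence coincide.\<close>

lemma AE_zero_if_integrals_Ioi_zero:
  fixes H :: "real \<Rightarrow> real"
  assumes H: "integrable lborel H"
    and zero: "\<And>c. (\<integral>x. indicator {c<..} x * H x \<partial>lborel) = 0"
  shows "AE x in lborel. H x = 0"
proof -
  define p where "p x = max 0 (H x)" for x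
  define q where "q x = max 0 (- H x)" for x
  have [measurable]: "H \<in> borel_measurable lborel"
    using H by auto
  have p: "integrable lborel p" and q: "integrable lborel q"
    unfolding p_def q_def
    by (rule Bochner_Integration.integrable_bound[OF H]; simp)+
  have density_Ioi: "emeasure (density lborel f) {c<..} = ennreal (\<integral>x. indicator {c<..} x * f x \<partial>lborel)"
    if f: "integrable lborel f" "\<And>x. 0 \<le> f x" for f :: "real \<Rightarrow> real" and c
  proof -
    have "emeasure (density lborel f) {c<..} = (\<integral>\<^sup>+x. ennreal (indicator {c<..} x * f x) \<partial>lborel)"
      using f by (subst emeasure_density) (auto intro!: nn_integral_cong simp: indicator_def)
    also have "\<dots> = ennreal (\<integral>x. indicator {c<..} x * f x \<partial>lborel)"
      using f integrable_mult_indicator[of "{c<..}" lborel f] by (intro nn_integral_eq_integral) auto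
    finally show ?thesis .
  qed
  have "(\<integral>x. indicator {c<..} x * p x \<partial>lborel) = (\<integral>x. indicator {c<..} x * q x \<partial>lborel)" for c
  proof -
    have "(\<integral>x. indicator {c<..} x * p x \<partial>lborel) - (\<integral>x. indicator {c<..} x * q x \<partial>lborel)
        = (\<integral>x. indicator {c<..} x * p x - indicator {c<..} x * q x \<partial>lborel)"
      using integrable_mult_indicator[of "{c<..}" lborel p] integrable_mult_indicator[of "{c<..}" lborel q] p q
      by (intro Bochner_Integration.integral_diff[symmetric]) auto
    also have "\<dots> = (\<integral>x. indicator {c<..} x * H x \<partial>lborel)"
      by (rule Bochner_Integration.integral_cong) (auto simp: p_def q_def indicator_def max_def)
    finally show ?thesis
      using zero by simp
  qed
  moreover have "0 \<le> p x" "0 \<le> q x" for x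
    by (simp_all add: p_def q_def)
  ultimately have "density lborel p = density lborel q"
    using p q by (intro measure_eqI_lessThan) (auto simp: density_Ioi)
  moreover have "(\<integral>\<^sup>+x. ennreal (p x) \<partial>lborel) \<noteq> \<infinity>"
    using nn_integral_eq_integral[OF p] by (auto simp: p_def)
  ultimately have "AE x in lborel. ennreal (p x) = ennreal (q x)"
    using p q by (subst (asm) finite_density_unique) (auto simp: p_def q_def)
  then show ?thesis
    by eventually_elim (auto simp: p_def q_def max_def split: if_splits)
qed

lemma integral_Ioi_indicator_Icc:
  fixes h :: "real \<Rightarrow> 'a::{banach, second_countable_topology}"
  assumes [measurable]: "h \<in> borel_measurable lborel" and "c \<le> b"
  shows "(\<integral>x. indicator {c<..} x *\<^sub>R (indicator {a..b} x *\<^sub>R h x) \<partial>lborel)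
    = (\<integral>x. indicator {max c a..b} x *\<^sub>R h x \<partial>lborel)"
proof (rule integral_cong_AE)
  show "AE x in lborel. indicator {c<..} x *\<^sub>R (indicator {a..b} x *\<^sub>R h x) = indicator {max c a..b} x *\<^sub>R h x"
    using AE_lborel_singleton[of c] by eventually_elim (auto simp: indicator_def)
qed measurable

lemma AE_zero_if_interval_integrals_zero:
  fixes h :: "real \<Rightarrow> complex"
  assumes h [measurable]: "h \<in> borel_measurable lborel"
    and int: "\<And>a b. a \<le> b \<Longrightarrow> integrable lborel (\<lambda>x. indicator {a..b} x *\<^sub>R h x)"
    and zero: "\<And>a b. a \<le> b \<Longrightarrow> (\<integral>x. indicator {a..b} x *\<^sub>R h x \<partial>lborel) = 0"
  shows "AE x in lborel. h x = 0"
proof -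
  have "AE x in lborel. x \<in> {-real n..real n} \<longrightarrow> h x = 0" for n :: nat
  proof -
    define H where "H x = indicator {-real n..real n} x *\<^sub>R h x" for x
    have H: "integrable lborel H"
      unfolding H_def by (rule int) simp
    have H_Ioi: "integrable lborel (\<lambda>x. indicator {c<..} x *\<^sub>R H x)" for c
      using H by (rule integrable_mult_indicator[rotated]) simp
    have H_Ioi_zero: "(\<integral>x. indicator {c<..} x *\<^sub>R H x \<partial>lborel) = 0" for c
    proof (cases "c \<le> real n")
      case True
      then show ?thesis
        unfolding H_def integral_Ioi_indicator_Icc[OF h True] using zero[of "max c (-real n)" "real n"] True
        by simp
    next
      case False
      then have "(\<lambda>x. indicator {c<..} x *\<^sub>R H x) = (\<lambda>x. 0)"
        by (auto simp: H_def indicator_def fun_eq_iff)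
      then show ?thesis
        by simp
    qed
    have "AE x in lborel. Re (H x) = 0" "AE x in lborel. Im (H x) = 0"
      using H_Ioi_zero integral_Re[OF H_Ioi] integral_Im[OF H_Ioi]
      by (auto intro!: AE_zero_if_integrals_Ioi_zero integrable_Re integrable_Im H)
    then show ?thesis
      by eventually_elim (simp add: H_def complex_eq_iff indicator_def)
  qed
  then have "AE x in lborel. \<forall>n::nat. x \<in> {-real n..real n} \<longrightarrow> h x = 0"
    by (subst AE_all_countable) auto
  then show ?thesis
  proof eventually_elim
    case (elim x)
    obtain n :: nat where "\<bar>x\<bar> \<le> real n"
      using real_arch_simple by blast
    then have "x \<in> {-real n..real n}"
      by auto
    then show ?case
      using elim by blast
  qed
qed

lemma weak_deriv_unique:
  assumes "weak_deriv v g1" "weak_deriv v g2"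
  shows "AE x in lborel. g1 x = g2 x"
proof -
  have "AE x in lborel. g1 x - g2 x = 0"
  proof (rule AE_zero_if_interval_integrals_zero)
    fix a b :: real
    assume "a \<le> b"
    with weak_derivD[OF assms(1)] weak_derivD[OF assms(2)]
    show "integrable lborel (\<lambda>x. indicator {a..b} x *\<^sub>R (g1 x - g2 x))"
      and "(\<integral>x. indicator {a..b} x *\<^sub>R (g1 x - g2 x) \<partial>lborel) = 0"
      by (auto simp: scaleR_diff_right)
  qed (use weak_deriv_measurable[OF assms(1)] weak_deriv_measurable[OF assms(2)] in measurable)
  then show ?thesis
    by simp
qed

section \<open>Square-integrable functions\<close>

lemma L2_integrable_mult:
  fixes f g :: "real \<Rightarrow> 'a::{real_normed_field, banach, second_countable_topology}"
  assumes "L2 f" "L2 g"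
  shows "integrable lborel (\<lambda>x. f x * g x)"
proof (rule Bochner_Integration.integrable_bound)
  show "integrable lborel (\<lambda>x. (norm (f x))\<^sup>2 + (norm (g x))\<^sup>2)"
    using assms unfolding L2_def by auto
  show "(\<lambda>x. f x * g x) \<in> borel_measurable lborel"
    using assms unfolding L2_def by auto
  have "norm (f x) * norm (g x) \<le> (norm (f x))\<^sup>2 + (norm (g x))\<^sup>2" for x
    using sum_squares_bound[of "norm (f x)" "norm (g x)"]
      mult_nonneg_nonneg[OF norm_ge_zero norm_ge_zero, of "f x" "g x"] by linarith
  then show "AE x in lborel. norm (f x * g x) \<le> norm ((norm (f x))\<^sup>2 + (norm (g x))\<^sup>2)"
    by (simp add: norm_mult)
qed

lemma L2_add:
  fixes f g :: "real \<Rightarrow> 'a::{real_normed_vector, banach, second_countable_topology}"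
  assumes "L2 f" "L2 g"
  shows "L2 (\<lambda>x. f x + g x)"
  unfolding L2_def
proof
  show "(\<lambda>x. f x + g x) \<in> borel_measurable lborel"
    using assms unfolding L2_def by auto
  show "integrable lborel (\<lambda>x. (norm (f x + g x))\<^sup>2)"
  proof (rule Bochner_Integration.integrable_bound)
    show "integrable lborel (\<lambda>x. 2 * (norm (f x))\<^sup>2 + 2 * (norm (g x))\<^sup>2)"
      using assms unfolding L2_def by auto
    show "(\<lambda>x. (norm (f x + g x))\<^sup>2) \<in> borel_measurable lborel"
      using assms unfolding L2_def by auto
    have "(norm (f x + g x))\<^sup>2 \<le> 2 * (norm (f x))\<^sup>2 + 2 * (norm (g x))\<^sup>2" for x
    proof -
      have "(norm (f x + g x))\<^sup>2 \<le> (norm (f x) + norm (g x))\<^sup>2"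
        by (simp add: norm_triangle_ineq power_mono)
      also have "\<dots> \<le> 2 * (norm (f x))\<^sup>2 + 2 * (norm (g x))\<^sup>2"
        unfolding power2_sum using sum_squares_bound[of "norm (f x)" "norm (g x)"] by linarith
      finally show ?thesis .
    qed
    then show "AE x in lborel. norm ((norm (f x + g x))\<^sup>2) \<le> norm (2 * (norm (f x))\<^sup>2 + 2 * (norm (g x))\<^sup>2)"
      by simp
  qed
qed

lemma L2_bounded_linear:
  assumes L: "bounded_linear L" and f: "L2 f"
  shows "L2 (\<lambda>x. L (f x))"
  unfolding L2_def
proof
  interpret L: bounded_linear L by (fact L)
  obtain K where K: "\<And>x. norm (L x) \<le> norm x * K" "K > 0"
    using L.pos_bounded by blast
  show "(\<lambda>x. L (f x)) \<in> borel_measurable lborel"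
    using L.continuous_on[OF continuous_on_id] f unfolding L2_def
    by (auto intro: borel_measurable_continuous_on)
  show "integrable lborel (\<lambda>x. (norm (L (f x)))\<^sup>2)"
  proof (rule Bochner_Integration.integrable_bound)
    show "integrable lborel (\<lambda>x. K\<^sup>2 * (norm (f x))\<^sup>2)"
      using f unfolding L2_def by auto
    show "(\<lambda>x. (norm (L (f x)))\<^sup>2) \<in> borel_measurable lborel"
      using \<open>(\<lambda>x. L (f x)) \<in> borel_measurable lborel\<close> by measurable
    have "(norm (L (f x)))\<^sup>2 \<le> K\<^sup>2 * (norm (f x))\<^sup>2" for x
      using power_mono[OF K(1)[of "f x"] norm_ge_zero] by (simp add: power_mult_distrib mult.commute)
    then show "AE x in lborel. norm ((norm (L (f x)))\<^sup>2) \<le> norm (K\<^sup>2 * (norm (f x))\<^sup>2)"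
      by simp
  qed
qed

lemma L2_mult_bounded:
  fixes f c :: "real \<Rightarrow> 'a::{real_normed_field, banach, second_countable_topology}"
  assumes f: "L2 f" and c: "c \<in> borel_measurable borel" "\<And>x. norm (c x) \<le> B"
  shows "L2 (\<lambda>x. c x * f x)"
  unfolding L2_def
proof
  show "(\<lambda>x. c x * f x) \<in> borel_measurable lborel"
    using assms unfolding L2_def by auto
  show "integrable lborel (\<lambda>x. (norm (c x * f x))\<^sup>2)"
  proof (rule Bochner_Integration.integrable_bound)
    show "integrable lborel (\<lambda>x. B\<^sup>2 * (norm (f x))\<^sup>2)"
      using f unfolding L2_def by auto
    show "(\<lambda>x. (norm (c x * f x))\<^sup>2) \<in> borel_measurable lborel"
      using assms unfolding L2_def by auto
    have "(norm (c x) * norm (f x))\<^sup>2 \<le> (B * norm (f x))\<^sup>2" for x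
      using c(2)[of x] by (intro power_mono mult_right_mono) auto
    then show "AE x in lborel. norm ((norm (c x * f x))\<^sup>2) \<le> norm (B\<^sup>2 * (norm (f x))\<^sup>2)"
      by (simp add: norm_mult power_mult_distrib)
  qed
qed

lemma L2_norm: "L2 f \<Longrightarrow> L2 (\<lambda>x. norm (f x))"
  unfolding L2_def by auto

lemma L2_AE_cong:
  assumes f: "L2 f" and g: "g \<in> borel_measurable borel" and fg: "AE x in lborel. f x = g x"
  shows "L2 g"
proof -
  have [measurable]: "f \<in> borel_measurable borel"
    using f unfolding L2_def by auto
  have "integrable lborel (\<lambda>x. (norm (f x))\<^sup>2) \<longleftrightarrow> integrable lborel (\<lambda>x. (norm (g x))\<^sup>2)"
    using fg g by (intro integrable_cong_AE) (auto elim: eventually_mono)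
  then show ?thesis
    using f g unfolding L2_def by auto
qed

lemma L2_weak_deriv_unique:
  assumes "weak_deriv v g" "weak_deriv v h" "L2 h"
  shows "L2 g"
  using weak_deriv_measurable[OF assms(1)]
  by (intro L2_AE_cong[OF assms(3) _ weak_deriv_unique[OF assms(2,1)]]) simp

section \<open>Behaviour at infinity\<close>

lemma tendsto_integral_indicator_at_top:
  fixes G :: "real \<Rightarrow> 'a::{banach, second_countable_topology}" and S :: "real \<Rightarrow> real set"
  assumes G: "integrable lborel G" and S: "\<And>x. S x \<in> sets lborel" and T: "T \<in> sets lborel"
    and ST: "\<And>t. eventually (\<lambda>x. indicator (S x) t = (indicator T t :: real)) at_top"
  shows "((\<lambda>x. \<integral>t. indicator (S x) t *\<^sub>R G t \<partial>lborel) \<longlongrightarrow> (\<integral>t. indicator T t *\<^sub>R G t \<partial>lborel)) at_top"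
proof (rule integral_dominated_convergence_at_top[where w="\<lambda>t. norm (G t)"
      and s="\<lambda>x t. indicator (S x) t *\<^sub>R G t" and f="\<lambda>t. indicator T t *\<^sub>R G t"])
  have [measurable]: "G \<in> borel_measurable lborel"
    using G by auto
  show "(\<lambda>t. indicator T t *\<^sub>R G t) \<in> borel_measurable lborel"
    using T by measurable
  show "(\<lambda>t. indicator (S x) t *\<^sub>R G t) \<in> borel_measurable lborel" for x
    using S[of x] by measurable
  show "integrable lborel (\<lambda>t. norm (G t))"
    using G by auto
  show "AE t in lborel. ((\<lambda>x. indicator (S x) t *\<^sub>R G t) \<longlongrightarrow> indicator T t *\<^sub>R G t) at_top"
    using ST by (intro AE_I2 tendsto_eventually) (auto elim: eventually_mono)
  show "\<forall>\<^sub>F x in at_top. AE t in lborel. norm (indicator (S x) t *\<^sub>R G t) \<le> norm (G t)"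
    by (intro always_eventually allI AE_I2) (auto simp: indicator_def)
qed

lemma weak_deriv_convergent_at_top:
  assumes F: "weak_deriv F G" and G: "integrable lborel G"
  shows "\<exists>L. (F \<longlongrightarrow> L) at_top"
proof -
  have "eventually (\<lambda>x. indicator {0..x} t = (indicator {0..} t :: real)) at_top" for t :: real
    using eventually_ge_at_top[of t] by eventually_elim (auto simp: indicator_def)
  then have "((\<lambda>x. \<integral>t. indicator {0..x} t *\<^sub>R G t \<partial>lborel) \<longlongrightarrow> (\<integral>t. indicator {0..} t *\<^sub>R G t \<partial>lborel)) at_top"
    using G by (intro tendsto_integral_indicator_at_top) auto
  then have "((\<lambda>x. F 0 + (\<integral>t. indicator {0..x} t *\<^sub>R G t \<partial>lborel)) \<longlongrightarrow> F 0 + (\<integral>t. indicator {0..} t *\<^sub>R G t \<partial>lborel)) at_top"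
    by (intro tendsto_add tendsto_const)
  moreover have "eventually (\<lambda>x. F 0 + (\<integral>t. indicator {0..x} t *\<^sub>R G t \<partial>lborel) = F x) at_top"
    using eventually_ge_at_top[of 0] by eventually_elim (simp add: weak_derivD(2)[OF F, symmetric])
  ultimately have "(F \<longlongrightarrow> F 0 + (\<integral>t. indicator {0..} t *\<^sub>R G t \<partial>lborel)) at_top"
    by (rule Lim_transform_eventually)
  then show ?thesis
    by blast
qed

lemma weak_deriv_convergent_at_bot:
  assumes F: "weak_deriv F G" and G: "integrable lborel G"
  shows "\<exists>L. (F \<longlongrightarrow> L) at_bot"
proof -
  have "eventually (\<lambda>x. indicator {-x..0} t = (indicator {..0} t :: real)) at_top" for t :: real
    using eventually_ge_at_top[of "-t"] by eventually_elim (auto simp: indicator_def)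
  then have "((\<lambda>x. \<integral>t. indicator {-x..0} t *\<^sub>R G t \<partial>lborel) \<longlongrightarrow> (\<integral>t. indicator {..0} t *\<^sub>R G t \<partial>lborel)) at_top"
    using G by (intro tendsto_integral_indicator_at_top) auto
  then have "((\<lambda>x. F 0 - (\<integral>t. indicator {-x..0} t *\<^sub>R G t \<partial>lborel)) \<longlongrightarrow> F 0 - (\<integral>t. indicator {..0} t *\<^sub>R G t \<partial>lborel)) at_top"
    by (intro tendsto_diff tendsto_const)
  moreover have "eventually (\<lambda>x. F 0 - (\<integral>t. indicator {-x..0} t *\<^sub>R G t \<partial>lborel) = F (-x)) at_top"
    using eventually_ge_at_top[of 0] by eventually_elim (simp add: weak_derivD(2)[OF F, symmetric])
  ultimately have "((\<lambda>x. F (-x)) \<longlongrightarrow> F 0 - (\<integral>t. indicator {..0} t *\<^sub>R G t \<partial>lborel)) at_top"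
    by (rule Lim_transform_eventually)
  then show ?thesis
    unfolding filterlim_at_bot_mirror by blast
qed

lemma integrable_tendsto_at_top_imp_zero:
  fixes F :: "real \<Rightarrow> real"
  assumes F: "integrable lborel F" and lim: "(F \<longlongrightarrow> L) at_top"
  shows "L = 0"
proof (rule ccontr)
  assume "L \<noteq> 0"
  then have "\<bar>L\<bar> / 2 < \<bar>L\<bar>"
    by simp
  then have "eventually (\<lambda>x. \<bar>L\<bar> / 2 < \<bar>F x\<bar>) at_top"
    by (rule order_tendstoD(1)[OF tendsto_rabs[OF lim]])
  then obtain M where M: "\<And>x. x \<ge> M \<Longrightarrow> \<bar>L\<bar> / 2 \<le> \<bar>F x\<bar>"
    by (metis eventually_at_top_linorder less_imp_le)
  have bound: "\<bar>L\<bar> / 2 * real n \<le> (\<integral>x. \<bar>F x\<bar> \<partial>lborel)" for n :: nat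
  proof -
    have "\<bar>L\<bar> / 2 * real n = (\<integral>x. indicator {M..M + real n} x * (\<bar>L\<bar> / 2) \<partial>lborel)"
      by simp
    also have "\<dots> \<le> (\<integral>x. \<bar>F x\<bar> \<partial>lborel)"
      using F M by (intro integral_mono integrable_mult_left integrable_real_indicator) (auto simp: indicator_def)
    finally show ?thesis .
  qed
  have "0 < \<bar>L\<bar> / 2"
    using \<open>L \<noteq> 0\<close> by simp
  then obtain n :: nat where "(\<integral>x. \<bar>F x\<bar> \<partial>lborel) < real n * (\<bar>L\<bar> / 2)"
    using reals_Archimedean3 by blast
  with bound[of n] show False
    by (simp add: mult.commute)
qed

lemma integrable_tendsto_at_bot_imp_zero:
  fixes F :: "real \<Rightarrow> real"
  assumes "integrable lborel F" and "(F \<longlongrightarrow> L) at_bot"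
  shows "L = 0"
proof (rule integrable_tendsto_at_top_imp_zero)
  show "integrable lborel (\<lambda>x. F (-x))"
    using lborel_integrable_real_affine_iff[of "-1" F 0] assms(1) by simp
  show "((\<lambda>x. F (-x)) \<longlongrightarrow> L) at_top"
    using assms(2) unfolding filterlim_at_bot_mirror .
qed

lemma L2_weak_deriv_tendsto_zero:
  assumes u: "weak_deriv u u'" and L2_u: "L2 u" and L2_u': "L2 u'"
  shows "(u \<longlongrightarrow> 0) at_top" and "(u \<longlongrightarrow> 0) at_bot"
proof -
  txt \<open>\<open>|u|\<^sup>2\<close> has an integrable derivative, so it converges at both ends; being integrable,
    its limits are \<open>0\<close>.\<close>
  define P where "P x = u x * cnj (u x)" for x
  have P: "weak_deriv P (\<lambda>x. u' x * cnj (u x) + u x * cnj (u' x))"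
    unfolding P_def by (rule weak_deriv_mult[OF u weak_deriv_cnj[OF u]])
  have P': "integrable lborel (\<lambda>x. u' x * cnj (u x) + u x * cnj (u' x))"
    using L2_bounded_linear[OF bounded_linear_cnj] L2_u L2_u'
    by (intro Bochner_Integration.integrable_add L2_integrable_mult) auto
  have norm_P: "norm (P x) = (norm (u x))\<^sup>2" for x
    by (simp add: P_def norm_mult power2_eq_square)
  have "integrable lborel (\<lambda>x. norm (P x))"
    using L2_u unfolding L2_def norm_P by auto
  have tendsto_zero: "(u \<longlongrightarrow> 0) F" if "(P \<longlongrightarrow> 0) F" for F
  proof -
    have "((\<lambda>x. sqrt (norm (P x))) \<longlongrightarrow> sqrt (norm (0::complex))) F"
      by (intro tendsto_intros that)
    then show ?thesis
      by (simp add: norm_P tendsto_norm_zero_iff)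
  qed
  obtain L where L: "(P \<longlongrightarrow> L) at_top"
    using weak_deriv_convergent_at_top[OF P P'] by blast
  have "norm L = 0"
    by (rule integrable_tendsto_at_top_imp_zero[OF _ tendsto_norm[OF L]])
      (use \<open>integrable lborel (\<lambda>x. norm (P x))\<close> in simp)
  with L show "(u \<longlongrightarrow> 0) at_top"
    by (intro tendsto_zero) simp
  obtain L' where L': "(P \<longlongrightarrow> L') at_bot"
    using weak_deriv_convergent_at_bot[OF P P'] by blast
  have "norm L' = 0"
    by (rule integrable_tendsto_at_bot_imp_zero[OF _ tendsto_norm[OF L']])
      (use \<open>integrable lborel (\<lambda>x. norm (P x))\<close> in simp)
  with L' show "(u \<longlongrightarrow> 0) at_bot"
    by (intro tendsto_zero) simp
qed

lemma X1_norm_tendsto_one: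
  assumes "X1 V"
  shows "((\<lambda>x. norm (V x)) \<longlongrightarrow> 1) at_top" and "((\<lambda>x. norm (V x)) \<longlongrightarrow> 1) at_bot"
proof -
  obtain g B where g: "weak_deriv V g" "L2 g" and B: "\<And>x. norm (V x) \<le> B"
    and L2_Q: "L2 (\<lambda>x. 1 - (norm (V x))\<^sup>2)"
    using assms unfolding X1_def bounded_iff by blast
  have [measurable]: "V \<in> borel_measurable borel"
    by (rule weak_deriv_borel_measurable[OF g(1)])
  define Q where "Q x = 1 - V x * cnj (V x)" for x
  define Q' where "Q' x = - (g x * cnj (V x) + V x * cnj (g x))" for x
  have "weak_deriv Q (\<lambda>x. 0 - (g x * cnj (V x) + V x * cnj (g x)))"
    unfolding Q_def by (intro weak_deriv_diff weak_deriv_const weak_deriv_mult weak_deriv_cnj g)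
  then have "weak_deriv Q Q'"
    by (simp add: Q'_def[abs_def])
  moreover have "Q = (\<lambda>x. of_real (1 - (norm (V x))\<^sup>2))"
    by (simp add: Q_def fun_eq_iff complex_norm_square[symmetric])
  then have "L2 Q"
    using L2_bounded_linear[OF bounded_linear_of_real L2_Q] by simp
  moreover have "L2 Q'"
  proof -
    have "L2 (\<lambda>x. cnj (V x) * g x)"
      by (rule L2_mult_bounded[OF g(2), of _ B]) (measurable, simp add: B)
    moreover have "L2 (\<lambda>x. V x * cnj (g x))"
      by (rule L2_mult_bounded[OF L2_bounded_linear[OF bounded_linear_cnj g(2)], of _ B]) (measurable, simp add: B)
    ultimately have "L2 (\<lambda>x. - (cnj (V x) * g x + V x * cnj (g x)))"
      by (intro L2_bounded_linear[OF bounded_linear_minus[OF bounded_linear_ident]] L2_add)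
    then show ?thesis
      by (simp add: Q'_def[abs_def] mult.commute)
  qed
  ultimately have Q_lim: "(Q \<longlongrightarrow> 0) at_top" "(Q \<longlongrightarrow> 0) at_bot"
    by (blast intro: L2_weak_deriv_tendsto_zero)+
  have norm_V: "norm (V x) = sqrt (1 - Re (Q x))" for x
    by (simp add: Q_def complex_norm_square[symmetric])
  show "((\<lambda>x. norm (V x)) \<longlongrightarrow> 1) at_top" "((\<lambda>x. norm (V x)) \<longlongrightarrow> 1) at_bot"
    unfolding norm_V by (auto intro!: tendsto_eq_intros Q_lim)
qed

lemma bounded_range_if_tendsto_at_top_at_bot:
  fixes f :: "real \<Rightarrow> 'a::real_normed_vector"
  assumes f: "continuous_on UNIV f" and top: "(f \<longlongrightarrow> a) at_top" and bot: "(f \<longlongrightarrow> b) at_bot"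
  shows "bounded (range f)"
proof -
  obtain M where M: "\<And>x. x \<ge> M \<Longrightarrow> f x \<in> ball a 1"
    using top[unfolded tendsto_iff, rule_format, of 1]
    by (auto simp: eventually_at_top_linorder dist_commute)
  obtain N where N: "\<And>x. x \<le> N \<Longrightarrow> f x \<in> ball b 1"
    using bot[unfolded tendsto_iff, rule_format, of 1]
    by (auto simp: eventually_at_bot_linorder dist_commute)
  have "f x \<in> ball a 1 \<union> ball b 1 \<union> f ` {N..M}" for x
    using M[of x] N[of x] by (cases "M \<le> x"; cases "x \<le> N") auto
  then have "range f \<subseteq> ball a 1 \<union> ball b 1 \<union> f ` {N..M}"
    by blast
  moreover have "compact (f ` {N..M})"
    by (rule compact_continuous_image[OF continuous_on_subset[OF f]]) auto
  ultimately show ?thesis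
    by (meson bounded_Un bounded_ball bounded_subset compact_imp_bounded)
qed

lemma H1_tendsto_zero:
  assumes "H1 w"
  shows "(w \<longlongrightarrow> 0) at_top" and "(w \<longlongrightarrow> 0) at_bot"
proof -
  obtain g where "weak_deriv w g" "L2 w" "L2 g"
    using assms unfolding H1_def by blast
  then show "(w \<longlongrightarrow> 0) at_top" "(w \<longlongrightarrow> 0) at_bot"
    by (rule L2_weak_deriv_tendsto_zero)+
qed

lemma H1_bounded:
  assumes "H1 w"
  shows "bounded (range w)"
proof -
  obtain g where "weak_deriv w g"
    using assms unfolding H1_def by blast
  then have "continuous_on UNIV w"
    by (rule weak_deriv_continuous)
  then show ?thesis
    using H1_tendsto_zero[OF assms] by (rule bounded_range_if_tendsto_at_top_at_bot)
qed

section \<open>Perturbation by an \<open>H\<^sup>1\<close> function\<close>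

lemma cmod_add_square: "(cmod (a + b))\<^sup>2 = (cmod a)\<^sup>2 + 2 * Re (a * cnj b) + (cmod b)\<^sup>2"
  by (simp only: cmod_power2) (simp add: power2_eq_square algebra_simps)

lemma X1_add_H1:
  assumes "X1 V0" and "H1 w"
  shows "X1 (\<lambda>x. V0 x + w x)"
proof -
  obtain g0 B0 where g0: "weak_deriv V0 g0" "L2 g0" and B0: "\<And>x. norm (V0 x) \<le> B0"
    and L2_V0: "L2 (\<lambda>x. 1 - (norm (V0 x))\<^sup>2)"
    using assms(1) unfolding X1_def bounded_iff by blast
  obtain g where g: "weak_deriv w g" "L2 g" and L2_w: "L2 w"
    using assms(2) unfolding H1_def by blast
  obtain Bw where Bw: "\<And>x. norm (w x) \<le> Bw"
    using H1_bounded[OF assms(2)] unfolding bounded_iff by blast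
  have [measurable]: "V0 \<in> borel_measurable borel" "w \<in> borel_measurable borel"
    using g0 g by (auto intro: weak_deriv_borel_measurable)
  have "norm (V0 x + w x) \<le> B0 + Bw" for x
    using norm_triangle_mono[OF B0 Bw] .
  then have "bounded (range (\<lambda>x. V0 x + w x))"
    unfolding bounded_iff by blast
  moreover have "weak_deriv (\<lambda>x. V0 x + w x) (\<lambda>x. g0 x + g x)" "L2 (\<lambda>x. g0 x + g x)"
    using weak_deriv_add[OF g0(1) g(1)] L2_add[OF g0(2) g(2)] by auto
  moreover have "L2 (\<lambda>x. 1 - (norm (V0 x + w x))\<^sup>2)"
  proof -
    have "L2 (\<lambda>x. V0 x * cnj (w x))"
      by (rule L2_mult_bounded[OF L2_bounded_linear[OF bounded_linear_cnj L2_w], of _ B0]) (measurable, simp add: B0)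
    then have "L2 (\<lambda>x. - 2 * Re (V0 x * cnj (w x)))"
      by (rule L2_bounded_linear[OF bounded_linear_compose[OF bounded_linear_mult_right bounded_linear_Re]])
    moreover have "L2 (\<lambda>x. - (norm (w x) * norm (w x)))"
      by (intro L2_bounded_linear[OF bounded_linear_minus[OF bounded_linear_ident]]
          L2_mult_bounded[OF L2_norm[OF L2_w], of _ Bw]) (measurable, simp add: Bw)
    ultimately have "L2 (\<lambda>x. (1 - (norm (V0 x))\<^sup>2) + (- 2 * Re (V0 x * cnj (w x)) + - (norm (w x) * norm (w x))))"
      by (intro L2_add L2_V0)
    moreover have "(\<lambda>x. (1 - (norm (V0 x))\<^sup>2) + (- 2 * Re (V0 x * cnj (w x)) + - (norm (w x) * norm (w x))))
        = (\<lambda>x. 1 - (norm (V0 x + w x))\<^sup>2)"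
      unfolding cmod_add_square by (simp add: fun_eq_iff power2_eq_square)
    ultimately show ?thesis
      by simp
  qed
  ultimately show ?thesis
    unfolding X1_def by blast
qed

lemma set_integrable_cinner:
  assumes v: "continuous_on UNIV v" and u: "weak_deriv u h" and ab: "a \<le> b"
  shows "set_integrable lborel {a..b} (\<lambda>x. cinner (\<i> * v x) (h x))"
proof -
  have "integrable lborel (\<lambda>x. indicator {a..b} x *\<^sub>R (cnj (h x) * (\<i> * v x)))"
    using weak_deriv_measurable[OF u] v
    by (intro integrable_interval_mult_continuous[OF weak_derivD(1)[OF weak_deriv_cnj[OF u] ab]])
      (auto intro: continuous_intros)
  from integrable_Re[OF this] show ?thesis
    unfolding set_integrable_def by (simp add: cinner_def mult.commute)
qed

lemma set_integral_cinner_by_parts: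
  assumes V: "weak_deriv V g0" and w: "weak_deriv w g" and ab: "a \<le> b"
  shows "(LINT x:{a..b}|lborel. cinner (\<i> * V x) (g x))
    = (LINT x:{a..b}|lborel. cinner (\<i> * w x) (g0 x)) + Re (\<i> * (V b * cnj (w b) - V a * cnj (w a)))"
proof -
  define P' where "P' x = g0 x * cnj (w x) + V x * cnj (g x)" for x
  have P: "weak_deriv (\<lambda>x. V x * cnj (w x)) P'"
    unfolding P'_def[abs_def] by (rule weak_deriv_mult[OF V weak_deriv_cnj[OF w]])
  have Re_i: "bounded_linear (\<lambda>z. Re (\<i> * z))"
    by (rule bounded_linear_compose[OF bounded_linear_Re bounded_linear_mult_right])
  have ind: "indicator {a..b} x *\<^sub>R Re (\<i> * P' x) = Re (\<i> * (indicator {a..b} x *\<^sub>R P' x))" for x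
    by (simp add: indicator_def)
  have int_P': "set_integrable lborel {a..b} (\<lambda>x. Re (\<i> * P' x))"
    unfolding set_integrable_def ind by (rule integrable_bounded_linear[OF Re_i weak_derivD(1)[OF P ab]])
  have boundary: "(LINT x:{a..b}|lborel. Re (\<i> * P' x)) = Re (\<i> * (V b * cnj (w b) - V a * cnj (w a)))"
    unfolding set_lebesgue_integral_def ind integral_bounded_linear[OF Re_i weak_derivD(1)[OF P ab]]
      weak_derivD(2)[OF P ab] ..
  have "cinner (\<i> * V x) (g x) = Re (\<i> * P' x) + cinner (\<i> * w x) (g0 x)" for x
    by (simp add: P'_def cinner_def algebra_simps)
  then have "(LINT x:{a..b}|lborel. cinner (\<i> * V x) (g x))
      = (LINT x:{a..b}|lborel. Re (\<i> * P' x) + cinner (\<i> * w x) (g0 x))"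
    by presburger
  also have "\<dots> = (LINT x:{a..b}|lborel. Re (\<i> * P' x)) + (LINT x:{a..b}|lborel. cinner (\<i> * w x) (g0 x))"
    by (rule set_integral_add(2)[OF int_P' set_integrable_cinner[OF weak_deriv_continuous[OF w] V ab]])
  finally show ?thesis
    unfolding boundary by simp
qed

lemma integrable_cinner:
  assumes "L2 w" "L2 h"
  shows "integrable lborel (\<lambda>x. cinner (\<i> * w x) (h x))"
proof -
  have "integrable lborel (\<lambda>x. Re (\<i> * (w x * cnj (h x))))"
    using assms by (intro integrable_Re integrable_mult_right L2_integrable_mult L2_bounded_linear[OF bounded_linear_cnj])
  then show ?thesis
    by (simp add: cinner_def mult.assoc)
qed

lemma tendsto_set_integral_symmetric:
  fixes f :: "real \<Rightarrow> 'a::{banach, second_countable_topology}"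
  assumes "integrable lborel f"
  shows "((\<lambda>R. LINT x:{-R..R}|lborel. f x) \<longlongrightarrow> integral\<^sup>L lborel f) at_top"
proof -
  have "eventually (\<lambda>R. indicator {-R..R} t = (indicator UNIV t :: real)) at_top" for t :: real
    using eventually_ge_at_top[of "\<bar>t\<bar>"] by eventually_elim (auto simp: indicator_def)
  then show ?thesis
    using tendsto_integral_indicator_at_top[OF assms, of "\<lambda>R. {-R..R}" UNIV]
    unfolding set_lebesgue_integral_def by simp
qed

lemma pR_add:
  assumes V: "weak_deriv V g0" and w: "weak_deriv w g" and R: "0 \<le> R"
  shows "2 * pR (\<lambda>x. V x + w x) (\<lambda>x. g0 x + g x) R = 2 * pR V g0 R
      + (2 * (LINT x:{-R..R}|lborel. cinner (\<i> * w x) (g0 x))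
        + (LINT x:{-R..R}|lborel. cinner (\<i> * w x) (g x))
        + Re (\<i> * (V R * cnj (w R) - V (-R) * cnj (w (-R)))))
      + (Arg (V R) - Arg (V R + w R)) + (Arg (V (-R) + w (-R)) - Arg (V (-R)))"
proof -
  have ab: "-R \<le> R"
    using R by simp
  note int = set_integrable_cinner[OF weak_deriv_continuous _ ab]
  have expand: "cinner (\<i> * (V x + w x)) (g0 x + g x)
      = (cinner (\<i> * V x) (g0 x) + cinner (\<i> * V x) (g x)) + (cinner (\<i> * w x) (g0 x) + cinner (\<i> * w x) (g x))" for x
    by (simp add: cinner_def algebra_simps)
  then have "(LINT x:{-R..R}|lborel. cinner (\<i> * (V x + w x)) (g0 x + g x))
      = (LINT x:{-R..R}|lborel. cinner (\<i> * V x) (g0 x)) + (LINT x:{-R..R}|lborel. cinner (\<i> * V x) (g x))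
        + ((LINT x:{-R..R}|lborel. cinner (\<i> * w x) (g0 x)) + (LINT x:{-R..R}|lborel. cinner (\<i> * w x) (g x)))"
    unfolding expand using int[OF V V] int[OF V w] int[OF w V] int[OF w w]
    by (simp add: set_integral_add)
  then show ?thesis
    unfolding pR_def set_integral_cinner_by_parts[OF V w ab] by (simp add: field_simps)
qed

lemma cis_Arg_diff: "z \<noteq> 0 \<Longrightarrow> z' \<noteq> 0 \<Longrightarrow> cis (Arg z - Arg z') = sgn (z / z')"
  by (simp add: cis_divide[symmetric] cis_Arg sgn_divide)

lemma tendsto_cis_Arg_diff_perturbation:
  fixes a b :: "'a \<Rightarrow> complex"
  assumes a: "((\<lambda>x. norm (a x)) \<longlongrightarrow> 1) F" and b: "(b \<longlongrightarrow> 0) F"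
  shows "((\<lambda>x. cis (Arg (a x + b x) - Arg (a x))) \<longlongrightarrow> 1) F"
    and "((\<lambda>x. cis (Arg (a x) - Arg (a x + b x))) \<longlongrightarrow> 1) F"
proof -
  have "((\<lambda>x. norm (b x) / norm (a x)) \<longlongrightarrow> 0 / 1) F"
    by (intro tendsto_divide tendsto_norm_zero[OF b] a) simp
  then have ba: "((\<lambda>x. norm (b x / a x)) \<longlongrightarrow> 0) F"
    by (simp only: norm_divide div_0)
  have one_plus: "((\<lambda>x. 1 + b x / a x) \<longlongrightarrow> 1) F"
    using tendsto_add[OF tendsto_const tendsto_norm_zero_cancel[OF ba], of 1] by simp
  have "eventually (\<lambda>x. 1/2 < norm (a x)) F"
    by (rule order_tendstoD(1)[OF a]) simp
  then have "eventually (\<lambda>x. 1 + b x / a x = (a x + b x) / a x) F"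
    by eventually_elim (auto simp: add_divide_distrib)
  with one_plus have q: "((\<lambda>x. (a x + b x) / a x) \<longlongrightarrow> 1) F"
    by (rule Lim_transform_eventually)
  have "((\<lambda>x. sgn ((a x + b x) / a x)) \<longlongrightarrow> 1) F"
    using tendsto_sgn[OF q] by simp
  moreover have "eventually (\<lambda>x. (a x + b x) / a x \<noteq> 0) F"
    by (rule tendsto_imp_eventually_ne[OF q]) simp
  then have "eventually (\<lambda>x. sgn ((a x + b x) / a x) = cis (Arg (a x + b x) - Arg (a x))) F"
    by eventually_elim (simp add: cis_Arg_diff)
  ultimately show first: "((\<lambda>x. cis (Arg (a x + b x) - Arg (a x))) \<longlongrightarrow> 1) F"
    by (rule Lim_transform_eventually)
  show "((\<lambda>x. cis (Arg (a x) - Arg (a x + b x))) \<longlongrightarrow> 1) F"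
    using tendsto_inverse[OF first] by (simp add: minus_diff_eq)
qed

lemma tendsto_momentum_correction:
  assumes X: "X1 V0" and H: "H1 w" and V0: "weak_deriv V0 g0" and w: "weak_deriv w g"
  shows "((\<lambda>R. 2 * (LINT x:{-R..R}|lborel. cinner (\<i> * w x) (g0 x))
      + (LINT x:{-R..R}|lborel. cinner (\<i> * w x) (g x))
      + Re (\<i> * (V0 R * cnj (w R) - V0 (-R) * cnj (w (-R)))))
    \<longlongrightarrow> 2 * (\<integral>x. cinner (\<i> * w x) (g0 x) \<partial>lborel) + (\<integral>x. cinner (\<i> * w x) (g x) \<partial>lborel)) at_top"
proof -
  obtain h0 B0 where h0: "weak_deriv V0 h0" "L2 h0" and B0: "\<And>x. norm (V0 x) \<le> B0"
    using X unfolding X1_def bounded_iff by blast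
  obtain h where h: "weak_deriv w h" "L2 h" and L2_w: "L2 w"
    using H unfolding H1_def by blast
  have "norm (V0 x * cnj (w x)) \<le> norm (w x) * B0" for x
    using mult_right_mono[OF B0 norm_ge_zero, of x "w x"] by (simp add: norm_mult mult.commute)
  then have boundary: "((\<lambda>x. V0 x * cnj (w x)) \<longlongrightarrow> 0) F" if "(w \<longlongrightarrow> 0) F" for F
    by (intro tendsto_0_le[OF that, of _ B0] always_eventually allI)
  have "((\<lambda>R. V0 R * cnj (w R) - V0 (-R) * cnj (w (-R))) \<longlongrightarrow> 0 - 0) at_top"
    using boundary[OF H1_tendsto_zero(2)[OF H]] unfolding filterlim_at_bot_mirror
    by (intro tendsto_diff boundary H1_tendsto_zero(1)[OF H])
  then have "((\<lambda>R. 2 * (LINT x:{-R..R}|lborel. cinner (\<i> * w x) (g0 x))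
      + (LINT x:{-R..R}|lborel. cinner (\<i> * w x) (g x))
      + Re (\<i> * (V0 R * cnj (w R) - V0 (-R) * cnj (w (-R)))))
    \<longlongrightarrow> 2 * (\<integral>x. cinner (\<i> * w x) (g0 x) \<partial>lborel) + (\<integral>x. cinner (\<i> * w x) (g x) \<partial>lborel)
      + Re (\<i> * (0 - 0))) at_top"
    by (intro tendsto_add tendsto_mult tendsto_const tendsto_Re tendsto_set_integral_symmetric
        integrable_cinner L2_w L2_weak_deriv_unique[OF V0 h0] L2_weak_deriv_unique[OF w h])
  then show ?thesis
    by simp
qed

lemma momentum_is_add:
  assumes X: "X1 V0" and H: "H1 w" and V0: "weak_deriv V0 g0" and w: "weak_deriv w g"
    and p0: "momentum_is V0 g0 p0"
  shows "momentum_is (\<lambda>x. V0 x + w x) (\<lambda>x. g0 x + g x)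
    (p0 + (1/2) * (\<integral>x. cinner (\<i> * w x) (g x) \<partial>lborel) + (\<integral>x. cinner (\<i> * w x) (g0 x) \<partial>lborel))"
proof -
  define A2 where "A2 = (\<integral>x. cinner (\<i> * w x) (g0 x) \<partial>lborel)"
  define A3 where "A3 = (\<integral>x. cinner (\<i> * w x) (g x) \<partial>lborel)"
  define D where "D R = 2 * (LINT x:{-R..R}|lborel. cinner (\<i> * w x) (g0 x))
    + (LINT x:{-R..R}|lborel. cinner (\<i> * w x) (g x))
    + Re (\<i> * (V0 R * cnj (w R) - V0 (-R) * cnj (w (-R))))" for R
  have D: "(D \<longlongrightarrow> 2 * A2 + A3) at_top"
    unfolding D_def[abs_def] A2_def A3_def by (rule tendsto_momentum_correction[OF X H V0 w])
  have phase_top: "((\<lambda>R. cis (Arg (V0 R) - Arg (V0 R + w R))) \<longlongrightarrow> 1) at_top"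
    by (rule tendsto_cis_Arg_diff_perturbation(2)[OF X1_norm_tendsto_one(1)[OF X] H1_tendsto_zero(1)[OF H]])
  have phase_bot: "((\<lambda>R. cis (Arg (V0 (-R) + w (-R)) - Arg (V0 (-R)))) \<longlongrightarrow> 1) at_top"
    using tendsto_cis_Arg_diff_perturbation(1)[OF X1_norm_tendsto_one(2)[OF X] H1_tendsto_zero(2)[OF H]]
    unfolding filterlim_at_bot_mirror .
  have "((\<lambda>R. cis (2 * pR V0 g0 R) * cis (D R) * cis (Arg (V0 R) - Arg (V0 R + w R))
      * cis (Arg (V0 (-R) + w (-R)) - Arg (V0 (-R)))) \<longlongrightarrow> cis (2 * p0) * cis (2 * A2 + A3) * 1 * 1) at_top"
    using p0 unfolding momentum_is_def
    by (intro tendsto_mult[OF tendsto_mult[OF tendsto_mult[OF _ tendsto_cis[OF D]] phase_top] phase_bot])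
  moreover have "eventually (\<lambda>R. cis (2 * pR V0 g0 R) * cis (D R) * cis (Arg (V0 R) - Arg (V0 R + w R))
      * cis (Arg (V0 (-R) + w (-R)) - Arg (V0 (-R))) = cis (2 * pR (\<lambda>x. V0 x + w x) (\<lambda>x. g0 x + g x) R)) at_top"
    using eventually_ge_at_top[of 0]
    by eventually_elim (simp only: cis_mult pR_add[OF V0 w] D_def)
  ultimately have "((\<lambda>R. cis (2 * pR (\<lambda>x. V0 x + w x) (\<lambda>x. g0 x + g x) R))
      \<longlongrightarrow> cis (2 * p0) * cis (2 * A2 + A3) * 1 * 1) at_top"
    by (rule Lim_transform_eventually)
  moreover have "cis (2 * p0) * cis (2 * A2 + A3) * 1 * 1 = cis (2 * (p0 + 1/2 * A3 + A2))"
    by (simp add: cis_mult algebra_simps)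
  ultimately show ?thesis
    unfolding momentum_is_def A2_def A3_def by simp
qed

theorem lemma4:
  fixes V0 w g0 g :: "real \<Rightarrow> complex"
  assumes "X1 V0" and "H1 w"
    and "weak_deriv V0 g0" and "weak_deriv w g"
  shows "X1 (\<lambda>x. V0 x + w x) \<and>
    (\<forall>p0. momentum_is V0 g0 p0 \<longrightarrow>
       momentum_is (\<lambda>x. V0 x + w x) (\<lambda>x. g0 x + g x)
         (p0 + (1/2) * (\<integral>x. cinner (\<i> * w x) (g x) \<partial>lborel)
             + (\<integral>x. cinner (\<i> * w x) (g0 x) \<partial>lborel)))"
  using X1_add_H1[OF assms(1,2)] momentum_is_add[OF assms] by blast

end
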